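(* Let $\delta\in(0,1]$, $\varepsilon\in(0,1/2]$, $c=4\ln(1/\varepsilon)$, $t=\lceil\log_c(2m)\rceil$, and for $j\in[t]$ let $P_j=\{(k,d):k\in[2m],\,d\in[c^{j-1},c^j)\}$, where a pair $(k,d)$ is identified with the set $\{k,k+d\}$. There is a constant $\gamma=\gamma(\delta,\varepsilon)\in(0,1]$ such that for every $(2,\delta,\varepsilon)$ insdel LDC $C:\{0,1\}^n\to\{0,1\}^m$ with a non-adaptive decoder and $m$ sufficiently large (depending on $\delta,\varepsilon$), and every $i\in[n]$, there exists $j\in[t]$ with $|P_j\cap\mathrm{Good}_i|\ge\gamma mc^j$.
   Context: $C$ is a $(q,\delta,\varepsilon)$ insdel LDC if a randomized $\mathrm{Dec}$, given oracle access to $y\in\{0,1\}^{m'}$, $m'$ and $i\in[n]$, reads at most $q$ symbols and satisfies $\Pr[\mathrm{Dec}(y,m',i)=x_i]\ge1/2+\varepsilon$ whenever $\mathrm{ED}(C(x),y)\le2\delta m$, where $\mathrm{ED}$ is insertion/deletion distance; non-adaptive means its query distribution does not depend on $y$. For $x\in\{0,1\}^n$, $C'(x)\in\{0,1\}^{2m}$ is $C(x)$ followed by $m$ independent uniform random bits. $\mathrm{Good}_i$ is the set of $Q\in\binom{[2m]}{q}$ (here $q=2$) such that some $f:\{0,1\}^q\to\{0,1\}$ has $\Pr[f(C'(x)_Q)=x_i]\ge1/2+\varepsilon/4$, over uniform $x$ and the padded bits. *)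

theory Defs
  imports "HOL-Probability.Probability"
begin

definition insdel_step :: "('a list \<times> 'a list) set" where
  "insdel_step = {(u, v). \<exists>a b c. (v = a @ [c] @ b \<and> u = a @ b) \<or> (u = a @ [c] @ b \<and> v = a @ b)}"

definition ED :: "'a list \<Rightarrow> 'a list \<Rightarrow> nat" where
  "ED u v = (LEAST k. (u, v) \<in> insdel_step ^^ k)"

text \<open>A non-adaptive randomized decoder: for every received length m' and index i,
  a probability distribution over pairs (Q, f), where Q is the list of queried
  positions (independent of the received word) and f computes the output from the
  queried symbols.\<close>
type_synonym decoder = "nat \<Rightarrow> nat \<Rightarrow> (nat list \<times> (bool list \<Rightarrow> bool)) pmf"

definition dec_success_prob :: "decoder \<Rightarrow> bool list \<Rightarrow> nat \<Rightarrow> bool \<Rightarrow> real" where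
  "dec_success_prob Dec y i b =
     measure_pmf.prob (Dec (length y) i) {(Q, f). f (map (\<lambda>j. y ! j) Q) = b}"

definition reads_at_most :: "nat \<Rightarrow> decoder \<Rightarrow> bool" where
  "reads_at_most q Dec \<longleftrightarrow>
     (\<forall>m' i Q f. (Q, f) \<in> set_pmf (Dec m' i) \<longrightarrow> length Q \<le> q \<and> (\<forall>j\<in>set Q. j < m'))"

text \<open>C : {0,1}^n \<rightarrow> {0,1}^m is a (q,\<delta>,\<epsilon>) insdel LDC with the non-adaptive decoder Dec
  (indices i \<in> [n] are 0-based: i < n).\<close>
definition insdel_LDC_nonadaptive ::
  "nat \<Rightarrow> real \<Rightarrow> real \<Rightarrow> nat \<Rightarrow> nat \<Rightarrow> (bool list \<Rightarrow> bool list) \<Rightarrow> decoder \<Rightarrow> bool" where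
  "insdel_LDC_nonadaptive q \<delta> \<epsilon> n m C Dec \<longleftrightarrow>
     (\<forall>x. length x = n \<longrightarrow> length (C x) = m) \<and>
     reads_at_most q Dec \<and>
     (\<forall>x y i. length x = n \<longrightarrow> i < n \<longrightarrow> real (ED (C x) y) \<le> 2 * \<delta> * real m \<longrightarrow>
        dec_success_prob Dec y i (x ! i) \<ge> 1/2 + \<epsilon>)"

definition padded :: "(bool list \<Rightarrow> bool list) \<Rightarrow> bool list \<Rightarrow> bool list \<Rightarrow> bool list" where
  "padded C x r = C x @ r"

definition restrict_word :: "bool list \<Rightarrow> nat set \<Rightarrow> bool list" where
  "restrict_word w Q = map (\<lambda>j. w ! j) (sorted_list_of_set Q)"

text \<open>Positions are 0-based: [2m] = {0..<2m}.  Probability over uniform x \<in> {0,1}^n and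
  uniform padding r \<in> {0,1}^m.\<close>
definition Good :: "nat \<Rightarrow> real \<Rightarrow> nat \<Rightarrow> nat \<Rightarrow> (bool list \<Rightarrow> bool list) \<Rightarrow> nat \<Rightarrow> nat set set" where
  "Good q \<epsilon> n m C i =
     {Q. Q \<subseteq> {0..<2*m} \<and> card Q = q \<and>
        (\<exists>f :: bool list \<Rightarrow> bool.
           measure_pmf.prob (pmf_of_set {(x, r). length x = n \<and> length r = m})
             {(x, r). f (restrict_word (padded C x r) Q) = x ! i} \<ge> 1/2 + \<epsilon>/4)}"

definition Pj :: "real \<Rightarrow> nat \<Rightarrow> nat \<Rightarrow> (nat \<times> nat) set" where
  "Pj c m j = {(k, d). k < 2*m \<and> c ^ (j - 1) \<le> real d \<and> real d < c ^ j}"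

definition Pj_good_count :: "real \<Rightarrow> nat \<Rightarrow> nat \<Rightarrow> nat set set \<Rightarrow> nat" where
  "Pj_good_count c m j G = card {(k, d) \<in> Pj c m j. {k, k + d} \<in> G}"

end

theory Submission
  imports Defs "HOL-Library.Sublist" "HOL-Analysis.Harmonic_Numbers"
begin

text \<open>
  Delete the first s symbols of C(x) and u further symbols spread evenly over it, and let the
  padding fill the end: for s, u < S, with S about \<delta>m/4, the received word is within edit
  distance 2(s + u) \<le> \<delta>m of C(x), so the decoder still succeeds with probability 1/2 + \<epsilon>.
  Averaging over the S^2 choices of (s, u) and over the decoder's coins gives one query pair
  a < b such that, for an \<epsilon>-fraction of the choices, the two positions of C'(x) actually read
  form a good pair.  Their gap lies between d = b - a and 2d, hence in two consecutive scales
  j, j + 1 with c^(j-1) \<le> d, and each such pair arises from at most O(m/d) choices.  If every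
  scale held fewer than \<gamma>mc^j good pairs, there would be only O(\<gamma>c^2m^2) such choices,
  contradicting the lower bound of order \<epsilon>\<delta>^2m^2.
\<close>

lemma insdel_step_delete_hd: "(b # ys, ys) \<in> insdel_step"
  unfolding insdel_step_def
  by (simp, rule exI[of _ "[]"], rule exI[of _ ys], rule exI[of _ b], simp)

lemma insdel_step_snoc: "(w, w @ [c]) \<in> insdel_step"
  unfolding insdel_step_def
  by (simp, rule exI[of _ w], rule exI[of _ "[]"], rule exI[of _ c], simp)

lemma insdel_step_Cons: "(u, v) \<in> insdel_step \<Longrightarrow> (a # u, a # v) \<in> insdel_step"
  unfolding insdel_step_def by (auto, (metis append_Cons)+)

lemma insdel_relpow_Cons: "(u, v) \<in> insdel_step ^^ k \<Longrightarrow> (a # u, a # v) \<in> insdel_step ^^ k"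
proof (induction k arbitrary: v)
  case (Suc k)
  then obtain w where "(u, w) \<in> insdel_step ^^ k" "(w, v) \<in> insdel_step" by auto
  with Suc.IH show ?case by (meson insdel_step_Cons relpow_Suc_I)
qed simp

lemma subseq_insdel_relpow: "subseq xs ys \<Longrightarrow> (ys, xs) \<in> insdel_step ^^ (length ys - length xs)"
proof (induction rule: list_emb.induct)
  case (list_emb_Nil ys)
  show ?case
  proof (induction ys)
    case (Cons a ys)
    from relpow_Suc_I2[OF insdel_step_delete_hd Cons.IH] show ?case by simp
  qed simp
next
  case (list_emb_Cons xs ys y)
  then have "(y # ys, xs) \<in> insdel_step ^^ Suc (length ys - length xs)"
    by (meson insdel_step_delete_hd relpow_Suc_I2)
  with list_emb_length[OF list_emb_Cons.hyps] show ?case by (simp add: Suc_diff_le)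
next
  case (list_emb_Cons2 x y xs ys)
  then show ?case using insdel_relpow_Cons by fastforce
qed

lemma append_insdel_relpow: "(w, w @ z) \<in> insdel_step ^^ length z"
proof (induction z rule: rev_induct)
  case (snoc c z)
  from relpow_Suc_I[OF snoc insdel_step_snoc[of "w @ z" c]] show ?case by simp
qed simp

lemma ED_le_relpow: "(u, v) \<in> insdel_step ^^ k \<Longrightarrow> ED u v \<le> k"
  unfolding ED_def by (rule Least_le)

lemma ED_subseq_append_le:
  assumes "subseq w u"
  shows "ED u (w @ z) \<le> (length u - length w) + length z"
proof (rule ED_le_relpow)
  show "(u, w @ z) \<in> insdel_step ^^ ((length u - length w) + length z)"
    unfolding relpow_add using subseq_insdel_relpow[OF assms] append_insdel_relpow[of w z]
    by (rule relcompI)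
qed

lemma subseq_map_nth_strict_mono:
  assumes "strict_mono \<phi>" "\<And>q. q < k \<Longrightarrow> \<phi> q < length xs"
  shows "subseq (map (\<lambda>q. xs ! \<phi> q) [0..<k]) xs"
proof -
  have "subseq (map \<phi> [0..<k]) [0..<length xs]"
    using assms by (intro sorted_subset_imp_subseq) (auto simp: sorted_wrt_map strict_mono_less)
  then have "subseq (map (nth xs) (map \<phi> [0..<k])) (map (nth xs) [0..<length xs])"
    by (rule subseq_map)
  then show ?thesis by (simp add: map_nth comp_def)
qed

section \<open>Spreading deletions over the codeword\<close>

text \<open>Position of C'(x) = w @ r read as symbol q of the corrupted word: the first s symbols of w
  are deleted and u further deletions are spread evenly, so reading runs into the padding r.\<close>

definition spread :: "nat \<Rightarrow> nat \<Rightarrow> nat \<Rightarrow> nat \<Rightarrow> nat" where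
  "spread m s u q = q + s + q * u div m"

lemma strict_mono_spread: "strict_mono (spread m s u)"
proof (rule strict_monoI_Suc)
  fix q
  have "q * u div m \<le> Suc q * u div m" by (rule div_le_mono) simp
  then show "spread m s u q < spread m s u (Suc q)" unfolding spread_def by simp
qed

lemma spread_le: "q \<le> m \<Longrightarrow> spread m s u q \<le> q + s + u"
proof -
  assume "q \<le> m"
  then have "q * u div m \<le> m * u div m" by (intro div_le_mono) simp
  also have "\<dots> \<le> u" by (cases "m = 0") auto
  finally show ?thesis unfolding spread_def by simp
qed

lemma ED_spread_corruption:
  assumes "length w = m" "s + u \<le> m"
  shows "ED w (map (\<lambda>q. (w @ r) ! spread m s u q) [0..<m]) \<le> 2 * (s + u)"
proof -
  define q0 where "q0 = m - (s + u)"
  have in_w: "spread m s u q < m" if "q < q0" for q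
    using spread_le[of q m s u] that assms unfolding q0_def by linarith
  have "[0..<m] = [0..<q0] @ [q0..<m]"
    using upt_add_eq_append[of 0 q0 "m - q0"] unfolding q0_def by simp
  then have split: "map (\<lambda>q. (w @ r) ! spread m s u q) [0..<m] =
      map (\<lambda>q. w ! spread m s u q) [0..<q0] @ map (\<lambda>q. (w @ r) ! spread m s u q) [q0..<m]"
    using in_w assms(1) by (simp add: nth_append)
  have "subseq (map (\<lambda>q. w ! spread m s u q) [0..<q0]) w"
    by (rule subseq_map_nth_strict_mono[OF strict_mono_spread]) (use in_w assms(1) in simp)
  from ED_subseq_append_le[OF this, of "map (\<lambda>q. (w @ r) ! spread m s u q) [q0..<m]"]
  show ?thesis
    unfolding split using assms unfolding q0_def by simp
qed

lemma mult_div_diff_bounds: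
  fixes a b m u :: nat
  assumes "a \<le> b" "0 < m"
  shows "m * (b * u div m - a * u div m) < (b - a) * u + m"
    and "(b - a) * u < m * (b * u div m - a * u div m) + m"
proof -
  have "a * u div m \<le> b * u div m" using assms by (intro div_le_mono) simp
  then have "m * (b * u div m - a * u div m) = m * (b * u div m) - m * (a * u div m)"
    by (simp add: diff_mult_distrib2)
  moreover have "(b - a) * u = b * u - a * u" by (simp add: diff_mult_distrib)
  moreover have "b * u = m * (b * u div m) + b * u mod m" "a * u = m * (a * u div m) + a * u mod m"
    by simp_all
  moreover have "b * u mod m < m" "a * u mod m < m" using assms by simp_all
  moreover have "a * u \<le> b * u" "m * (a * u div m) \<le> m * (b * u div m)"
    using assms \<open>a * u div m \<le> b * u div m\<close> by simp_all
  ultimately show "m * (b * u div m - a * u div m) < (b - a) * u + m"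
    and "(b - a) * u < m * (b * u div m - a * u div m) + m" by linarith+
qed

lemma spread_diff:
  "a \<le> b \<Longrightarrow> spread m s u b - spread m s u a = (b - a) + (b * u div m - a * u div m)"
  using div_le_mono[of "a * u" "b * u" m] unfolding spread_def by simp

lemma spread_diff_le:
  assumes "a \<le> b" "u \<le> m"
  shows "spread m s u b - spread m s u a \<le> 2 * (b - a)"
proof (cases "m = 0")
  case False
  have "(b - a) * u \<le> m * (b - a)" using assms(2) by simp
  then have "m * (b * u div m - a * u div m) < m * (b - a) + m"
    using mult_div_diff_bounds(1)[of a b m u] assms False by linarith
  then have "b * u div m - a * u div m < b - a + 1"
    by (metis add.commute mult_Suc_right mult_less_cancel1 plus_1_eq_Suc)
  then show ?thesis using spread_diff[OF assms(1)] by simp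
qed (simp add: spread_diff[OF assms(1)])

lemma card_mult_div_diff_eq_le:
  fixes a b m S v :: nat
  assumes "a < b" "0 < m"
  shows "real (card {u. u < S \<and> b * u div m - a * u div m = v}) \<le> 2 * real m / real (b - a) + 1"
proof -
  define A where "A = {u. u < S \<and> b * u div m - a * u div m = v}"
  define d where "d = b - a"
  have close: "d * u < d * u' + 2 * m" if "u \<in> A" "u' \<in> A" for u u'
    using mult_div_diff_bounds[of a b m u] mult_div_diff_bounds[of a b m u'] that assms
    unfolding A_def d_def by auto
  have "card A \<le> 2 * m div d + 1"
  proof (cases "A = {}")
    case False
    have "finite A" unfolding A_def by simp
    define u0 where "u0 = Min A"
    have u0: "u0 \<in> A" "\<And>u. u \<in> A \<Longrightarrow> u0 \<le> u"
      unfolding u0_def using \<open>finite A\<close> False by auto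
    have "A \<subseteq> {u0..u0 + 2 * m div d}"
    proof
      fix u assume "u \<in> A"
      then have "d * (u - u0) < 2 * m"
        using close[OF \<open>u \<in> A\<close> u0(1)] u0(2) by (simp add: diff_mult_distrib2 less_diff_conv2)
      then have "d * (u - u0) div d \<le> 2 * m div d" by (intro div_le_mono) simp
      then show "u \<in> {u0..u0 + 2 * m div d}" using u0(2)[OF \<open>u \<in> A\<close>] assms unfolding d_def by simp
    qed
    then show ?thesis using card_mono[of "{u0..u0 + 2 * m div d}" A] by simp
  qed simp
  then have "real (card A) \<le> real (2 * m div d) + 1" by linarith
  also have "real (2 * m div d) \<le> real (2 * m) / real d" by (rule of_nat_div_le_of_nat)
  finally show ?thesis unfolding A_def d_def by simp
qed

lemma exists_scale:
  fixes c x :: real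
  assumes "1 < c" "1 \<le> x"
  shows "\<exists>j\<ge>1. c ^ (j - 1) \<le> x \<and> x < c ^ j"
proof -
  obtain N where "x < c ^ N" using real_arch_pow[OF assms(1)] by blast
  define j where "j = (LEAST j. x < c ^ j)"
  have xj: "x < c ^ j" unfolding j_def using \<open>x < c ^ N\<close> by (rule LeastI)
  have j1: "j \<ge> 1" using xj assms by (cases j) auto
  have "\<not> x < c ^ (j - 1)" unfolding j_def
    by (rule not_less_Least) (use j1 j_def in simp)
  then show ?thesis using xj j1 by (intro exI[of _ j]) auto
qed

lemma scale_le_scale_of_le_twice:
  fixes c d g :: real
  assumes c: "2 < c" and j: "c ^ (j - 1) \<le> d" "d < c ^ j"
    and k: "c ^ (k - 1) \<le> g" "g < c ^ k" and dg: "d \<le> g" "g \<le> 2 * d"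
  shows "j \<le> k \<and> k \<le> Suc j"
proof
  show "j \<le> k"
  proof (rule ccontr)
    assume "\<not> j \<le> k"
    then have "c ^ k \<le> c ^ (j - 1)" using c by (intro power_increasing) auto
    then show False using j k dg by linarith
  qed
next
  show "k \<le> Suc j"
  proof (rule ccontr)
    assume "\<not> k \<le> Suc j"
    then have "c * c ^ j \<le> c ^ (k - 1)"
      using c power_increasing[of "Suc j" "k - 1" c] by simp
    moreover have "2 * c ^ j < c * c ^ j" using c by simp
    ultimately show False using j k dg by linarith
  qed
qed

lemma scale_le_ceiling_log:
  fixes c x :: real
  assumes c: "1 < c" and j: "1 \<le> j" "c ^ (j - 1) < x"
  shows "j \<le> nat \<lceil>log c x\<rceil>"
proof -
  have "0 < x" using j c by (smt (verit) zero_le_power)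
  have "c powr real (j - 1) < x" using j c by (subst powr_realpow) auto
  then have "real (j - 1) < log c x" using less_log_iff[OF c \<open>0 < x\<close>] by simp
  then have "int j - 1 < \<lceil>log c x\<rceil>"
    using j by (simp add: less_ceiling_iff)
  then show ?thesis by linarith
qed

lemma measure_pmf_exists_ge_expectation:
  fixes f :: "'a \<Rightarrow> real"
  assumes "integrable (measure_pmf D) f"
  shows "\<exists>\<omega>\<in>set_pmf D. measure_pmf.expectation D f \<le> f \<omega>"
proof (rule ccontr)
  assume "\<not> ?thesis"
  then have "AE \<omega> in measure_pmf D. f \<omega> < measure_pmf.expectation D f"
    by (auto simp: AE_measure_pmf_iff not_le)
  then have "measure_pmf.expectation D f < measure_pmf.expectation D (\<lambda>_. measure_pmf.expectation D f)"
    by (intro measure_pmf.integral_less_AE_space assms) auto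
  then show False by simp
qed

lemma measure_pmf_exists_many_above_threshold:
  fixes D :: "'a pmf" and F :: "'b \<Rightarrow> 'a \<Rightarrow> real"
  assumes "finite \<Theta>" "0 \<le> t" and F_range: "\<And>\<theta> \<omega>. 0 \<le> F \<theta> \<omega>" "\<And>\<theta> \<omega>. F \<theta> \<omega> \<le> 1"
    and F_mean: "\<And>\<theta>. \<theta> \<in> \<Theta> \<Longrightarrow> \<alpha> \<le> measure_pmf.expectation D (F \<theta>)"
  shows "\<exists>\<omega>\<in>set_pmf D. (\<alpha> - t) * real (card \<Theta>) \<le> real (card {\<theta>\<in>\<Theta>. t \<le> F \<theta> \<omega>})"
proof -
  define H where "H \<omega> = real (card {\<theta>\<in>\<Theta>. t \<le> F \<theta> \<omega>})" for \<omega>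
  have int_F: "integrable (measure_pmf D) (F \<theta>)" for \<theta>
    by (rule measure_pmf.integrable_const_bound[where B=1]) (use F_range in auto)
  have int_H: "integrable (measure_pmf D) H"
    by (rule measure_pmf.integrable_const_bound[where B="real (card \<Theta>)"])
      (auto simp: H_def intro!: card_mono \<open>finite \<Theta>\<close>)
  have sum_le: "(\<Sum>\<theta>\<in>\<Theta>. F \<theta> \<omega>) \<le> H \<omega> + real (card \<Theta>) * t" for \<omega>
  proof -
    have "(\<Sum>\<theta>\<in>\<Theta>. F \<theta> \<omega>) \<le> (\<Sum>\<theta>\<in>\<Theta>. (if t \<le> F \<theta> \<omega> then 1 else 0) + t)"
      using F_range(2) \<open>0 \<le> t\<close> by (intro sum_mono) (smt (verit))
    also have "\<dots> = H \<omega> + real (card \<Theta>) * t"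
      unfolding H_def by (simp add: sum.distrib sum.If_cases \<open>finite \<Theta>\<close> Collect_conj_eq Int_commute)
    finally show ?thesis .
  qed
  have "\<alpha> * real (card \<Theta>) \<le> (\<Sum>\<theta>\<in>\<Theta>. measure_pmf.expectation D (F \<theta>))"
    using sum_mono[of \<Theta> "\<lambda>_. \<alpha>"] F_mean by (simp add: mult.commute)
  also have "\<dots> = measure_pmf.expectation D (\<lambda>\<omega>. \<Sum>\<theta>\<in>\<Theta>. F \<theta> \<omega>)"
    by (rule Bochner_Integration.integral_sum[symmetric]) (rule int_F)
  also have "\<dots> \<le> measure_pmf.expectation D (\<lambda>\<omega>. H \<omega> + real (card \<Theta>) * t)"
    by (intro integral_mono sum_le) (use int_F int_H in auto)
  also have "\<dots> = measure_pmf.expectation D H + real (card \<Theta>) * t"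
    using int_H by simp
  finally have "(\<alpha> - t) * real (card \<Theta>) \<le> measure_pmf.expectation D H"
    by (simp add: algebra_simps)
  with measure_pmf_exists_ge_expectation[OF int_H] show ?thesis
    unfolding H_def by (meson order_trans)
qed

lemma expectation_prob_pmf_of_set_ge:
  fixes D :: "'a pmf" and P :: "'b \<Rightarrow> 'a \<Rightarrow> bool"
  assumes "finite \<Omega>" "\<Omega> \<noteq> {}" and P_prob: "\<And>x. x \<in> \<Omega> \<Longrightarrow> \<alpha> \<le> measure_pmf.prob D {\<omega>. P x \<omega>}"
  shows "\<alpha> \<le> measure_pmf.expectation D (\<lambda>\<omega>. measure_pmf.prob (pmf_of_set \<Omega>) {x. P x \<omega>})"
proof -
  have card_pos: "0 < real (card \<Omega>)" using assms by (simp add: card_gt_0_iff)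
  have prob_eq: "measure_pmf.prob (pmf_of_set \<Omega>) {x. P x \<omega>} =
      (\<Sum>x\<in>\<Omega>. indicator {\<omega>. P x \<omega>} \<omega>) / real (card \<Omega>)" for \<omega>
    by (simp add: measure_pmf_of_set assms indicator_def sum.If_cases Int_def)
  have "\<alpha> * real (card \<Omega>) \<le> (\<Sum>x\<in>\<Omega>. measure_pmf.prob D {\<omega>. P x \<omega>})"
    using sum_mono[of \<Omega> "\<lambda>_. \<alpha>"] P_prob by (simp add: mult.commute)
  also have "\<dots> = measure_pmf.expectation D (\<lambda>\<omega>. \<Sum>x\<in>\<Omega>. indicator {\<omega>. P x \<omega>} \<omega>)"
    by (subst Bochner_Integration.integral_sum)
      (auto intro!: measure_pmf.integrable_const_bound[where B=1])
  finally show ?thesis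
    using card_pos unfolding prob_eq by (simp add: field_simps)
qed

section \<open>Good query pairs from a decoder\<close>

lemma subset_pair_less:
  fixes Q :: "nat list"
  assumes "length Q \<le> 2" "\<forall>q\<in>set Q. q < m" "0 < m"
  shows "\<exists>a b. a < b \<and> b \<le> m \<and> set Q \<subseteq> {a, b}"
proof -
  obtain q1 q2 where q: "set Q \<subseteq> {q1, q2}" "q1 < m" "q2 < m"
  proof (cases Q)
    case Nil
    then show ?thesis using that[of 0 0] assms(3) by simp
  next
    case (Cons x Q')
    show ?thesis
    proof (cases Q')
      case Nil
      then show ?thesis using that[of x x] \<open>Q = x # Q'\<close> assms(2) by simp
    next
      case (Cons y Q'')
      then have "Q = [x, y]" using assms(1) \<open>Q = x # Q'\<close> by simp
      then show ?thesis using that[of x y] assms(2) by simp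
    qed
  qed
  show ?thesis
  proof (cases "q1 = q2")
    case True
    then show ?thesis using q by (intro exI[of _ q1] exI[of _ "Suc q1"]) auto
  next
    case False
    then show ?thesis using q by (intro exI[of _ "min q1 q2"] exI[of _ "max q1 q2"]) auto
  qed
qed

lemma pair_Good_of_query:
  fixes pos :: "nat \<Rightarrow> nat" and Q :: "nat list" and f :: "bool list \<Rightarrow> bool"
  assumes "set Q \<subseteq> {a, b}" "pos a < pos b" "pos b < 2 * m"
    and success: "1/2 + \<epsilon>/4 \<le> measure_pmf.prob (pmf_of_set {(x, r). length x = n \<and> length r = m})
        {(x, r). f (map (\<lambda>q. padded C x r ! pos q) Q) = x ! i}"
  shows "{pos a, pos b} \<in> Good 2 \<epsilon> n m C i"
proof -
  define f' where "f' w = f (map (\<lambda>q. if q = a then w ! 0 else w ! 1) Q)" for w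
  have f': "f' (restrict_word w {pos a, pos b}) = f (map (\<lambda>q. w ! pos q) Q)" for w
    unfolding f'_def
  proof (rule arg_cong[where f = f], rule map_cong)
    fix q assume "q \<in> set Q"
    have "restrict_word w {pos a, pos b} = [w ! pos a, w ! pos b]"
      unfolding restrict_word_def using assms(2) by simp
    then show "(if q = a then restrict_word w {pos a, pos b} ! 0 else restrict_word w {pos a, pos b} ! 1)
        = w ! pos q"
      using assms(1) \<open>q \<in> set Q\<close> by auto
  qed simp
  show ?thesis
    unfolding Good_def using assms(2,3) success by (auto simp: f' intro!: exI[of _ f'])
qed

lemma LDC_success_on_spread_corruption:
  assumes LDC: "insdel_LDC_nonadaptive 2 \<delta> \<epsilon> n m C Dec" and "i < n" "length x = n"
    and "s + u \<le> m" "real (s + u) \<le> \<delta> * real m"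
  shows "1/2 + \<epsilon> \<le> measure_pmf.prob (Dec m i)
    {(Q, f). f (map (\<lambda>q. padded C x r ! spread m s u q) Q) = x ! i}"
proof -
  define y where "y = map (\<lambda>q. padded C x r ! spread m s u q) [0..<m]"
  have "length (C x) = m" "reads_at_most 2 Dec"
    using LDC \<open>length x = n\<close> unfolding insdel_LDC_nonadaptive_def by auto
  have "ED (C x) y \<le> 2 * (s + u)"
    unfolding y_def padded_def using ED_spread_corruption[OF \<open>length (C x) = m\<close> assms(4)] .
  then have "real (ED (C x) y) \<le> 2 * real (s + u)" by simp
  also have "\<dots> \<le> 2 * \<delta> * real m" using assms(5) by simp
  finally have "real (ED (C x) y) \<le> 2 * \<delta> * real m" .
  then have "1/2 + \<epsilon> \<le> dec_success_prob Dec y i (x ! i)"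
    using LDC assms(2,3) unfolding insdel_LDC_nonadaptive_def by blast
  also have "\<dots> = measure_pmf.prob (Dec m i) {(Q, f). f (map (\<lambda>q. padded C x r ! spread m s u q) Q) = x ! i}"
    (is "_ = measure_pmf.prob _ ?E")
  proof -
    have "length y = m" unfolding y_def by simp
    have agree: "map (\<lambda>j. y ! j) Q = map (\<lambda>q. padded C x r ! spread m s u q) Q"
      if "(Q, f) \<in> set_pmf (Dec m i)" for Q f
    proof -
      have "\<forall>j\<in>set Q. j < m"
        using \<open>reads_at_most 2 Dec\<close> that unfolding reads_at_most_def by blast
      then show ?thesis unfolding y_def by simp
    qed
    have null: "pmf (Dec m i) \<omega> = 0"
      if "\<omega> \<in> {(Q, f). f (map (\<lambda>j. y ! j) Q) = x ! i} - ?E \<or> \<omega> \<in> ?E - {(Q, f). f (map (\<lambda>j. y ! j) Q) = x ! i}"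
      for \<omega>
    proof (cases "\<omega> \<in> set_pmf (Dec m i)")
      case True
      obtain Q f where \<omega>: "\<omega> = (Q, f)" by (cases \<omega>)
      with agree True have "map (\<lambda>j. y ! j) Q = map (\<lambda>q. padded C x r ! spread m s u q) Q" by blast
      with that \<omega> show ?thesis by auto
    qed (simp add: set_pmf_iff)
    show ?thesis
      unfolding dec_success_prob_def \<open>length y = m\<close> by (rule measure_prob_cong_0) (use null in blast)+
  qed
  finally show ?thesis .
qed

lemma finite_word_pairs: "finite {(x :: bool list, r :: bool list). length x = n \<and> length r = m}"
proof -
  have "{(x :: bool list, r :: bool list). length x = n \<and> length r = m} =
      {x. set x \<subseteq> UNIV \<and> length x = n} \<times> {r. set r \<subseteq> UNIV \<and> length r = m}"
    by auto
  then show ?thesis by (simp only:) (intro finite_cartesian_product finite_lists_length_eq, simp_all)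
qed

definition spread_success ::
  "(bool list \<Rightarrow> bool list) \<Rightarrow> nat \<Rightarrow> nat \<Rightarrow> nat \<Rightarrow> nat \<times> nat \<Rightarrow> nat list \<times> (bool list \<Rightarrow> bool) \<Rightarrow> real"
where
  "spread_success C n m i \<theta> \<omega> = measure_pmf.prob (pmf_of_set {(x, r). length x = n \<and> length r = m})
     {(x, r). snd \<omega> (map (\<lambda>q. padded C x r ! spread m (fst \<theta>) (snd \<theta>) q) (fst \<omega>)) = x ! i}"

lemma expectation_spread_success_ge:
  assumes LDC: "insdel_LDC_nonadaptive 2 \<delta> \<epsilon> n m C Dec" and "i < n"
    and "fst \<theta> + snd \<theta> \<le> m" "real (fst \<theta> + snd \<theta>) \<le> \<delta> * real m"
  shows "1/2 + \<epsilon> \<le> measure_pmf.expectation (Dec m i) (spread_success C n m i \<theta>)"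
  unfolding spread_success_def
proof (rule expectation_prob_pmf_of_set_ge[OF finite_word_pairs])
  have "(replicate n False, replicate m False) \<in> {(x, r). length x = n \<and> length r = m}" by simp
  then show "{(x :: bool list, r :: bool list). length x = n \<and> length r = m} \<noteq> {}" by blast
  fix xr assume "xr \<in> {(x :: bool list, r :: bool list). length x = n \<and> length r = m}"
  then obtain x r where "xr = (x, r)" "length x = n" by auto
  from LDC_success_on_spread_corruption[OF LDC \<open>i < n\<close> \<open>length x = n\<close> assms(3,4)]
  show "1/2 + \<epsilon> \<le> measure_pmf.prob (Dec m i) {\<omega>. case xr of (x, r) \<Rightarrow>
      snd \<omega> (map (\<lambda>q. padded C x r ! spread m (fst \<theta>) (snd \<theta>) q) (fst \<omega>)) = x ! i}"
    unfolding \<open>xr = (x, r)\<close> by (simp add: case_prod_beta')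
qed

lemma spread_success_Good:
  assumes "a < b" "b \<le> m" "s + u < m" "set Q \<subseteq> {a, b}"
    and "1/2 + \<epsilon>/4 \<le> spread_success C n m i (s, u) (Q, f)"
  shows "{spread m s u a, spread m s u b} \<in> Good 2 \<epsilon> n m C i"
proof (rule pair_Good_of_query[where pos = "spread m s u" and f = f and Q = Q])
  show "spread m s u a < spread m s u b" using strict_mono_spread \<open>a < b\<close> by (rule strict_monoD)
  have "spread m s u b \<le> b + s + u" using spread_le \<open>b \<le> m\<close> .
  then show "spread m s u b < 2 * m" using assms(2,3) by linarith
qed (use assms(4,5) in \<open>simp_all add: spread_success_def\<close>)

lemma LDC_exists_query_many_Good_spreads:
  assumes LDC: "insdel_LDC_nonadaptive 2 \<delta> \<epsilon> n m C Dec" and "i < n" "0 < \<epsilon>" "0 < m"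
    and "2 * S \<le> m" "2 * real S \<le> \<delta> * real m"
  shows "\<exists>a b. a < b \<and> b \<le> m \<and> 3 * \<epsilon> / 4 * real S ^ 2 \<le>
    real (card {(s, u) \<in> {..<S} \<times> {..<S}. {spread m s u a, spread m s u b} \<in> Good 2 \<epsilon> n m C i})"
proof -
  have "1/2 + \<epsilon> \<le> measure_pmf.expectation (Dec m i) (spread_success C n m i \<theta>)"
    if "\<theta> \<in> {..<S} \<times> {..<S}" for \<theta>
  proof (rule expectation_spread_success_ge[OF LDC \<open>i < n\<close>])
    have "fst \<theta> + snd \<theta> \<le> 2 * S" using that by auto
    then show "fst \<theta> + snd \<theta> \<le> m" "real (fst \<theta> + snd \<theta>) \<le> \<delta> * real m"
      using assms(5,6) by linarith+
  qed
  moreover have "0 \<le> spread_success C n m i \<theta> \<omega>" "spread_success C n m i \<theta> \<omega> \<le> 1" for \<theta> \<omega>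
    unfolding spread_success_def by simp_all
  moreover have "0 \<le> 1/2 + \<epsilon>/4" using \<open>0 < \<epsilon>\<close> by simp
  ultimately obtain \<omega> where "\<omega> \<in> set_pmf (Dec m i)" and many:
    "(1/2 + \<epsilon> - (1/2 + \<epsilon>/4)) * real (card ({..<S} \<times> {..<S})) \<le>
      real (card {\<theta> \<in> {..<S} \<times> {..<S}. 1/2 + \<epsilon>/4 \<le> spread_success C n m i \<theta> \<omega>})"
    using measure_pmf_exists_many_above_threshold[of "{..<S} \<times> {..<S}" "1/2 + \<epsilon>/4"
        "spread_success C n m i" "1/2 + \<epsilon>" "Dec m i"]
    by blast
  obtain Q f where \<omega>: "\<omega> = (Q, f)" by fastforce
  have "length Q \<le> 2" "\<forall>q\<in>set Q. q < m"
    using LDC \<open>\<omega> \<in> set_pmf (Dec m i)\<close> unfolding \<omega> insdel_LDC_nonadaptive_def reads_at_most_def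
    by blast+
  then obtain a b where "a < b" "b \<le> m" "set Q \<subseteq> {a, b}"
    using subset_pair_less \<open>0 < m\<close> by blast
  have "{\<theta> \<in> {..<S} \<times> {..<S}. 1/2 + \<epsilon>/4 \<le> spread_success C n m i \<theta> \<omega>} \<subseteq>
      {(s, u) \<in> {..<S} \<times> {..<S}. {spread m s u a, spread m s u b} \<in> Good 2 \<epsilon> n m C i}"
  proof
    fix \<theta> assume "\<theta> \<in> {\<theta> \<in> {..<S} \<times> {..<S}. 1/2 + \<epsilon>/4 \<le> spread_success C n m i \<theta> \<omega>}"
    then obtain s u where "\<theta> = (s, u)" "s < S" "u < S" "1/2 + \<epsilon>/4 \<le> spread_success C n m i (s, u) (Q, f)"
      unfolding \<omega> by auto
    moreover have "s + u < m" using \<open>s < S\<close> \<open>u < S\<close> assms(5) by linarith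
    ultimately show "\<theta> \<in> {(s, u) \<in> {..<S} \<times> {..<S}. {spread m s u a, spread m s u b} \<in> Good 2 \<epsilon> n m C i}"
      using spread_success_Good[OF \<open>a < b\<close> \<open>b \<le> m\<close> _ \<open>set Q \<subseteq> {a, b}\<close>] by simp
  qed
  then have "real (card {\<theta> \<in> {..<S} \<times> {..<S}. 1/2 + \<epsilon>/4 \<le> spread_success C n m i \<theta> \<omega>}) \<le>
      real (card {(s, u) \<in> {..<S} \<times> {..<S}. {spread m s u a, spread m s u b} \<in> Good 2 \<epsilon> n m C i})"
    by (intro of_nat_mono card_mono) (rule finite_subset[of _ "{..<S} \<times> {..<S}"], auto)
  moreover have "real (card ({..<S} \<times> {..<S})) = real S ^ 2" by (simp add: power2_eq_square)
  ultimately show ?thesis using many \<open>a < b\<close> \<open>b \<le> m\<close> by (intro exI[of _ a] exI[of _ b]) auto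
qed

section \<open>Counting good pairs by scale\<close>

lemma real_card_le_card_image_mult:
  fixes f :: "'a \<Rightarrow> 'b" and K :: real
  assumes "finite A" and fibre: "\<And>y. y \<in> f ` A \<Longrightarrow> real (card {x\<in>A. f x = y}) \<le> K"
  shows "real (card A) \<le> real (card (f ` A)) * K"
proof -
  have "card (\<Union>y\<in>f ` A. {x\<in>A. f x = y}) \<le> (\<Sum>y\<in>f ` A. card {x\<in>A. f x = y})"
    by (rule card_UN_le) (use \<open>finite A\<close> in simp)
  moreover have "(\<Union>y\<in>f ` A. {x\<in>A. f x = y}) = A" by auto
  ultimately have "real (card A) \<le> (\<Sum>y\<in>f ` A. real (card {x\<in>A. f x = y}))"
    unfolding of_nat_sum[symmetric] of_nat_le_iff by simp
  also have "\<dots> \<le> (\<Sum>y\<in>f ` A. K)" by (rule sum_mono) (rule fibre)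
  finally show ?thesis by (simp add: mult.commute)
qed

lemma card_spread_fibre_le:
  assumes "a < b" "0 < m"
  shows "real (card {(s, u) \<in> {..<S} \<times> {..<S}.
      (spread m s u a, spread m s u b - spread m s u a) = (k, g)}) \<le> 2 * real m / real (b - a) + 1"
proof -
  define A where "A = {(s, u) \<in> {..<S} \<times> {..<S}. (spread m s u a, spread m s u b - spread m s u a) = (k, g)}"
  have "inj_on snd A"
  proof (rule inj_onI)
    fix \<theta> \<theta>' assume "\<theta> \<in> A" "\<theta>' \<in> A" "snd \<theta> = snd \<theta>'"
    moreover obtain s u s' u' where "\<theta> = (s, u)" "\<theta>' = (s', u')" by fastforce
    ultimately show "\<theta> = \<theta>'" by (simp add: A_def spread_def)
  qed
  moreover have "snd ` A \<subseteq> {u. u < S \<and> b * u div m - a * u div m = g - (b - a)}"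
  proof
    fix u assume "u \<in> snd ` A"
    then obtain s where "(s, u) \<in> A" by force
    then have "u < S" "spread m s u b - spread m s u a = g" by (auto simp: A_def)
    then show "u \<in> {u. u < S \<and> b * u div m - a * u div m = g - (b - a)}"
      using spread_diff[of a b m s u] assms(1) by simp
  qed
  ultimately have "card A \<le> card {u. u < S \<and> b * u div m - a * u div m = g - (b - a)}"
    by (intro card_inj_on_le) auto
  then have "real (card A) \<le> real (card {u. u < S \<and> b * u div m - a * u div m = g - (b - a)})"
    by simp
  also have "\<dots> \<le> 2 * real m / real (b - a) + 1"
    by (rule card_mult_div_diff_eq_le[OF assms])
  finally show ?thesis unfolding A_def .
qed

lemma finite_pairs_in_bounded_family:
  fixes G :: "nat set set"
  assumes "\<forall>P\<in>G. P \<subseteq> {0..<N}"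
  shows "finite {(k, g). {k, k + g} \<in> G}"
proof (rule finite_subset)
  show "{(k, g). {k, k + g} \<in> G} \<subseteq> {..<N} \<times> {..<N}"
  proof
    fix p assume "p \<in> {(k, g). {k, k + g} \<in> G}"
    then obtain k g where "p = (k, g)" "{k, k + g} \<in> G" by auto
    then have "k + g < N" using assms by auto
    then show "p \<in> {..<N} \<times> {..<N}" using \<open>p = (k, g)\<close> by auto
  qed
qed simp

lemma gap_pairs_subset_scales:
  fixes G :: "nat set set" and c :: real
  assumes "2 < c" "1 \<le> d" "c ^ (j - 1) \<le> real d" "real d < c ^ j" and G: "\<forall>P\<in>G. P \<subseteq> {0..<2 * m}"
  shows "{(k, g). d \<le> g \<and> g \<le> 2 * d \<and> {k, k + g} \<in> G} \<subseteq>
    (\<Union>j' \<in> {j, Suc j} \<inter> {1..nat \<lceil>log c (2 * real m)\<rceil>}. {(k, g) \<in> Pj c m j'. {k, k + g} \<in> G})"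
proof safe
  have "1 < c" using \<open>2 < c\<close> by simp
  fix k g assume g: "d \<le> g" "g \<le> 2 * d" and "{k, k + g} \<in> G"
  then have "k + g < 2 * m" using G by auto
  obtain j' where j': "1 \<le> j'" "c ^ (j' - 1) \<le> real g" "real g < c ^ j'"
    using exists_scale[OF \<open>1 < c\<close>, of "real g"] g \<open>1 \<le> d\<close> by auto
  have "j \<le> j' \<and> j' \<le> Suc j"
    using scale_le_scale_of_le_twice[OF \<open>2 < c\<close> assms(3,4) j'(2,3)] g by simp
  moreover have "j' \<le> nat \<lceil>log c (2 * real m)\<rceil>"
    using \<open>k + g < 2 * m\<close> j' by (intro scale_le_ceiling_log[OF \<open>1 < c\<close>]) auto
  moreover have "(k, g) \<in> Pj c m j'"
    unfolding Pj_def using \<open>k + g < 2 * m\<close> j' by simp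
  ultimately show "(k, g) \<in> (\<Union>j' \<in> {j, Suc j} \<inter> {1..nat \<lceil>log c (2 * real m)\<rceil>}.
      {(k, g) \<in> Pj c m j'. {k, k + g} \<in> G})"
    using j'(1) \<open>{k, k + g} \<in> G\<close> by (intro UN_I[of j']) auto
qed

lemma card_Good_gap_pairs_le:
  fixes G :: "nat set set" and c \<gamma> :: real
  assumes "1 \<le> d" "2 < c" "0 \<le> \<gamma>" and G: "\<forall>P\<in>G. P \<subseteq> {0..<2 * m}"
    and sparse: "\<forall>j\<in>{1..nat \<lceil>log c (2 * real m)\<rceil>}. real (Pj_good_count c m j G) < \<gamma> * real m * c ^ j"
  shows "real (card {(k, g). d \<le> g \<and> g \<le> 2 * d \<and> {k, k + g} \<in> G}) \<le> 2 * \<gamma> * c^2 * real m * real d"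
proof -
  have "1 < c" using \<open>2 < c\<close> by simp
  obtain j where j: "1 \<le> j" "c ^ (j - 1) \<le> real d" "real d < c ^ j"
    using exists_scale[OF \<open>1 < c\<close>, of "real d"] \<open>1 \<le> d\<close> by auto
  define good_at where "good_at j' = {(k, g) \<in> Pj c m j'. {k, k + g} \<in> G}" for j'
  define J where "J = {j, Suc j} \<inter> {1..nat \<lceil>log c (2 * real m)\<rceil>}"
  have "finite (good_at j')" for j'
    using finite_pairs_in_bounded_family[OF G] by (rule finite_subset[rotated]) (auto simp: good_at_def)
  then have "card {(k, g). d \<le> g \<and> g \<le> 2 * d \<and> {k, k + g} \<in> G} \<le> card (\<Union>j'\<in>J. good_at j')"
    using gap_pairs_subset_scales[OF \<open>2 < c\<close> \<open>1 \<le> d\<close> j(2,3) G]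
    by (intro card_mono) (simp_all add: J_def good_at_def)
  also have "\<dots> \<le> (\<Sum>j'\<in>J. card (good_at j'))"
    by (rule card_UN_le) (simp add: J_def)
  finally have "real (card {(k, g). d \<le> g \<and> g \<le> 2 * d \<and> {k, k + g} \<in> G}) \<le> (\<Sum>j'\<in>J. real (card (good_at j')))"
    unfolding of_nat_sum[symmetric] of_nat_le_iff .
  also have "\<dots> \<le> (\<Sum>j'\<in>J. \<gamma> * real m * c ^ Suc j)"
  proof (rule sum_mono)
    fix j' assume "j' \<in> J"
    then have "real (card (good_at j')) < \<gamma> * real m * c ^ j'"
      using sparse unfolding J_def good_at_def Pj_good_count_def by blast
    also have "\<dots> \<le> \<gamma> * real m * c ^ Suc j"
      using \<open>j' \<in> J\<close> \<open>2 < c\<close> \<open>0 \<le> \<gamma>\<close> unfolding J_def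
      by (intro mult_left_mono power_increasing) auto
    finally show "real (card (good_at j')) \<le> \<gamma> * real m * c ^ Suc j" by simp
  qed
  also have "\<dots> \<le> 2 * (\<gamma> * real m * c ^ Suc j)"
  proof -
    have "card J \<le> 2" unfolding J_def by (rule order_trans[OF card_mono[of "{j, Suc j}"]]) auto
    then show ?thesis using \<open>0 \<le> \<gamma>\<close> \<open>2 < c\<close> by (simp add: mult_right_mono)
  qed
  also have "c ^ Suc j = c^2 * c ^ (j - 1)"
    using j(1) by (cases j) (simp_all add: power2_eq_square)
  also have "2 * (\<gamma> * real m * (c^2 * c ^ (j - 1))) \<le> 2 * (\<gamma> * real m * (c^2 * real d))"
    using j(2) \<open>0 \<le> \<gamma>\<close> by (intro mult_left_mono) auto
  finally show ?thesis by (simp add: algebra_simps)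
qed

lemma spread_gap_pair_mem:
  assumes "a < b" "u \<le> m" "{spread m s u a, spread m s u b} \<in> G"
  shows "(spread m s u a, spread m s u b - spread m s u a) \<in>
    {(k, g). b - a \<le> g \<and> g \<le> 2 * (b - a) \<and> {k, k + g} \<in> G}"
proof -
  have "spread m s u a < spread m s u b"
    using strict_mono_spread assms(1) by (rule strict_monoD)
  moreover have "b - a \<le> spread m s u b - spread m s u a" "spread m s u b - spread m s u a \<le> 2 * (b - a)"
    using spread_diff[of a b m s u] spread_diff_le[OF _ assms(2), of a b s] assms(1) by auto
  ultimately show ?thesis using assms(3) by simp
qed

lemma card_spread_pairs_Good_le:
  fixes G :: "nat set set" and c \<gamma> :: real
  assumes "a < b" "b \<le> m" "S \<le> m" "2 < c" "0 \<le> \<gamma>" and G: "\<forall>P\<in>G. P \<subseteq> {0..<2 * m}"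
    and sparse: "\<forall>j\<in>{1..nat \<lceil>log c (2 * real m)\<rceil>}. real (Pj_good_count c m j G) < \<gamma> * real m * c ^ j"
  shows "real (card {(s, u) \<in> {..<S} \<times> {..<S}. {spread m s u a, spread m s u b} \<in> G})
    \<le> 6 * \<gamma> * c^2 * real m ^ 2"
proof -
  define A where "A = {(s, u) \<in> {..<S} \<times> {..<S}. {spread m s u a, spread m s u b} \<in> G}"
  define pair where "pair = (\<lambda>(s, u). (spread m s u a, spread m s u b - spread m s u a))"
  define d where "d = b - a"
  have "0 < m" "1 \<le> d" "d \<le> m" using assms(1,2) unfolding d_def by auto
  have "finite A" unfolding A_def by (rule finite_subset[of _ "{..<S} \<times> {..<S}"]) auto
  have "pair ` A \<subseteq> {(k, g). d \<le> g \<and> g \<le> 2 * d \<and> {k, k + g} \<in> G}"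
  proof
    fix p assume "p \<in> pair ` A"
    then obtain s u where "(s, u) \<in> A" "p = pair (s, u)" by auto
    then have "u \<le> m" "{spread m s u a, spread m s u b} \<in> G" using assms(3) by (auto simp: A_def)
    from spread_gap_pair_mem[OF assms(1) this] show "p \<in> {(k, g). d \<le> g \<and> g \<le> 2 * d \<and> {k, k + g} \<in> G}"
      unfolding \<open>p = pair (s, u)\<close> pair_def d_def by simp
  qed
  moreover have "finite {(k, g). d \<le> g \<and> g \<le> 2 * d \<and> {k, k + g} \<in> G}"
    using finite_pairs_in_bounded_family[OF G] by (rule finite_subset[rotated]) auto
  ultimately have "real (card (pair ` A)) \<le> real (card {(k, g). d \<le> g \<and> g \<le> 2 * d \<and> {k, k + g} \<in> G})"
    by (intro of_nat_mono card_mono)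
  also have "\<dots> \<le> 2 * \<gamma> * c^2 * real m * real d"
    by (rule card_Good_gap_pairs_le[OF \<open>1 \<le> d\<close> assms(4,5) G sparse])
  finally have image_bound: "real (card (pair ` A)) \<le> 2 * \<gamma> * c^2 * real m * real d" .
  have "real (card A) \<le> real (card (pair ` A)) * (2 * real m / real d + 1)"
  proof (rule real_card_le_card_image_mult[OF \<open>finite A\<close>])
    fix p assume "p \<in> pair ` A"
    obtain k g where "p = (k, g)" by fastforce
    let ?fibre = "{(s, u) \<in> {..<S} \<times> {..<S}. (spread m s u a, spread m s u b - spread m s u a) = (k, g)}"
    have "{\<theta> \<in> A. pair \<theta> = p} \<subseteq> ?fibre"
      using \<open>p = (k, g)\<close> by (auto simp: A_def pair_def)
    moreover have "finite ?fibre" by (rule finite_subset[of _ "{..<S} \<times> {..<S}"]) auto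
    ultimately have "real (card {\<theta> \<in> A. pair \<theta> = p}) \<le> real (card ?fibre)"
      by (intro of_nat_mono card_mono)
    also have "\<dots> \<le> 2 * real m / real d + 1"
      unfolding d_def by (rule card_spread_fibre_le[OF assms(1) \<open>0 < m\<close>])
    finally show "real (card {\<theta> \<in> A. pair \<theta> = p}) \<le> 2 * real m / real d + 1" .
  qed
  also have "\<dots> \<le> 2 * \<gamma> * c^2 * real m * real d * (2 * real m / real d + 1)"
    by (rule mult_right_mono[OF image_bound]) simp
  also have "\<dots> = 2 * \<gamma> * c^2 * real m * (2 * real m + real d)"
    using \<open>1 \<le> d\<close> by (simp add: field_simps)
  also have "\<dots> \<le> 2 * \<gamma> * c^2 * real m * (3 * real m)"
    using \<open>d \<le> m\<close> \<open>0 \<le> \<gamma>\<close> by (intro mult_left_mono) auto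
  finally show ?thesis unfolding A_def by (simp add: power2_eq_square)
qed

lemma LDC_exists_dense_scale:
  fixes \<delta> \<epsilon> c :: real
  assumes "0 < \<delta>" "\<delta> \<le> 1" "0 < \<epsilon>" "2 < c" "8 \<le> \<delta> * real m"
    and LDC: "insdel_LDC_nonadaptive 2 \<delta> \<epsilon> n m C Dec" and "i < n"
  shows "\<exists>j \<in> {1..nat \<lceil>log c (2 * real m)\<rceil>}.
    \<epsilon> * \<delta>^2 / (1000 * c^2) * real m * c ^ j \<le> real (Pj_good_count c m j (Good 2 \<epsilon> n m C i))"
proof (rule ccontr)
  define \<gamma> where "\<gamma> = \<epsilon> * \<delta>^2 / (1000 * c^2)"
  assume "\<not> ?thesis"
  then have sparse: "\<forall>j \<in> {1..nat \<lceil>log c (2 * real m)\<rceil>}.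
      real (Pj_good_count c m j (Good 2 \<epsilon> n m C i)) < \<gamma> * real m * c ^ j"
    unfolding \<gamma>_def by auto
  have "\<delta> * real m \<le> real m" using assms(1,2) by (simp add: mult_left_le_one_le)
  define S where "S = nat \<lfloor>\<delta> * real m / 4\<rfloor>"
  have S_lower: "\<delta> * real m / 8 \<le> real S" and S_upper: "4 * real S \<le> \<delta> * real m"
    unfolding S_def using assms(5) by linarith+
  then have "0 < m" "2 * S \<le> m" "2 * real S \<le> \<delta> * real m" "S \<le> m"
    using assms(5) \<open>\<delta> * real m \<le> real m\<close> by linarith+
  obtain a b where "a < b" "b \<le> m" and many: "3 * \<epsilon> / 4 * real S ^ 2 \<le>
      real (card {(s, u) \<in> {..<S} \<times> {..<S}. {spread m s u a, spread m s u b} \<in> Good 2 \<epsilon> n m C i})"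
    using LDC_exists_query_many_Good_spreads[OF LDC \<open>i < n\<close> \<open>0 < \<epsilon>\<close> \<open>0 < m\<close> \<open>2 * S \<le> m\<close>
        \<open>2 * real S \<le> \<delta> * real m\<close>] by blast
  have "\<forall>P \<in> Good 2 \<epsilon> n m C i. P \<subseteq> {0..<2 * m}" unfolding Good_def by blast
  from card_spread_pairs_Good_le[OF \<open>a < b\<close> \<open>b \<le> m\<close> \<open>S \<le> m\<close> \<open>2 < c\<close> _ this sparse]
  have few: "real (card {(s, u) \<in> {..<S} \<times> {..<S}. {spread m s u a, spread m s u b} \<in> Good 2 \<epsilon> n m C i})
      \<le> 6 * \<gamma> * c^2 * real m ^ 2"
    unfolding \<gamma>_def using \<open>0 < \<epsilon>\<close> by simp
  \<comment> \<open>\<gamma> = \<epsilon>\<delta>^2/(1000c^2) and S \<ge> \<delta>m/8 leave the margin 3/256 > 6/1000\<close>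
  define X where "X = \<delta> * real m"
  have "0 < X" unfolding X_def using assms(5) by linarith
  then have "0 < \<epsilon> * X^2" using \<open>0 < \<epsilon>\<close> by simp
  have "3 / 256 * (\<epsilon> * X^2) = 3 * \<epsilon> / 4 * (X / 8)^2" by (simp add: power_divide)
  also have "\<dots> \<le> 3 * \<epsilon> / 4 * real S ^ 2"
    using S_lower assms(3,5) unfolding X_def by (intro mult_left_mono power_mono) auto
  also have "\<dots> \<le> 6 * \<gamma> * c^2 * real m ^ 2" using many few by linarith
  also have "\<dots> = 6 / 1000 * (\<epsilon> * X^2)"
    unfolding \<gamma>_def X_def using \<open>2 < c\<close> by (simp add: power_mult_distrib)
  finally show False using \<open>0 < \<epsilon> * X^2\<close> by linarith
qed

theorem mainTheorem15:
  fixes \<delta> \<epsilon> :: real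
  assumes "0 < \<delta>" "\<delta> \<le> 1" "0 < \<epsilon>" "\<epsilon> \<le> 1/2"
  defines "c \<equiv> 4 * ln (1 / \<epsilon>)"
  shows "\<exists>\<gamma>::real. 0 < \<gamma> \<and> \<gamma> \<le> 1 \<and>
    (\<exists>M::nat. \<forall>n m :: nat. \<forall>C :: bool list \<Rightarrow> bool list. \<forall>Dec :: decoder.
       m \<ge> M \<longrightarrow> insdel_LDC_nonadaptive 2 \<delta> \<epsilon> n m C Dec \<longrightarrow>
       (\<forall>i < n. \<exists>j \<in> {1..nat \<lceil>log c (2 * real m)\<rceil>}.
          real (Pj_good_count c m j (Good 2 \<epsilon> n m C i)) \<ge> \<gamma> * real m * c ^ j))"
proof -
  have "ln 2 \<le> ln (1 / \<epsilon>)" using assms(3,4) by (simp add: field_simps)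
  then have "2 < c" unfolding c_def using ln2_ge_two_thirds by linarith
  \<comment> \<open>c > 2 is all that is used about c\<close>
  define \<gamma> where "\<gamma> = \<epsilon> * \<delta>^2 / (1000 * c^2)"
  have "0 < \<gamma>" unfolding \<gamma>_def using assms \<open>2 < c\<close> by simp
  moreover have "\<gamma> \<le> 1"
  proof -
    have "\<epsilon> * \<delta>^2 \<le> 1" using assms by (intro mult_le_one) (auto simp: power_le_one)
    moreover have "2^2 \<le> c^2" using \<open>2 < c\<close> by (intro power_mono) auto
    then have "1 \<le> 1000 * c^2" by simp
    ultimately show ?thesis unfolding \<gamma>_def by (simp add: divide_le_eq)
  qed
  moreover have "8 \<le> \<delta> * real m" if "nat \<lceil>8 / \<delta>\<rceil> \<le> m" for m
    using that assms(1) by (simp add: field_simps nat_le_iff ceiling_le_iff)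
  ultimately show ?thesis
    using LDC_exists_dense_scale[OF assms(1,2,3) \<open>2 < c\<close>] unfolding \<gamma>_def
    by (intro exI[of _ \<gamma>] conjI exI[of _ "nat \<lceil>8 / \<delta>\<rceil>"] allI impI) (auto simp: \<gamma>_def)
qed

end
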